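(* Let $A$ be a non-empty set and let $\phi:\ell_\infty(A)\to\mathbb R$ be a linear functional. Define $g_\phi:\ell_\infty(A)\to\mathbb R_+$ by $g_\phi(x^* )=|\phi(|x^*|)|$. Then $g_\phi\in H[\ell_1(A)]_+$ and $\|g_\phi\|_{FBL[\ell_1(A)]}=\sup\{|\phi(x^* )|:x^*\in B_{\ell_\infty(A)}\}$.
   Context: Identify $\ell_1(A)^*$ with $\ell_\infty(A)$. $H[\ell_1(A)]$ is the vector space of positively homogeneous functions $f:\ell_\infty(A)\to\mathbb R$ ($f(\lambda x^* )=\lambda f(x^* )$ for $\lambda>0$), ordered pointwise, with nonnegative cone $H[\ell_1(A)]_+$. For $f\in H[\ell_1(A)]$, $\|f\|_{FBL[\ell_1(A)]}:=\sup\{\sum_{k=1}^n|f(x_k^* )| : n\in\mathbb N,\ x_1^*,\dots,x_n^*\in\ell_\infty(A),\ \sup_{a\in A}\sum_{k=1}^n|x_k^*(a)|\le1\}\in[0,\infty]$. *)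

theory Defs
  imports "HOL-Analysis.Analysis" "HOL-Library.Extended_Real"
begin

text \<open>ell_infty(A), realised as the bounded real functions on A that vanish off A.\<close>
definition linf :: "'a set \<Rightarrow> ('a \<Rightarrow> real) set" where
  "linf A = {x. bdd_above ((\<lambda>a. \<bar>x a\<bar>) ` A) \<and> (\<forall>a. a \<notin> A \<longrightarrow> x a = 0)}"

definition linear_functional_linf :: "'a set \<Rightarrow> (('a \<Rightarrow> real) \<Rightarrow> real) \<Rightarrow> bool" where
  "linear_functional_linf A \<phi> \<longleftrightarrow>
     (\<forall>x\<in>linf A. \<forall>y\<in>linf A. \<phi> (\<lambda>a. x a + y a) = \<phi> x + \<phi> y) \<and>
     (\<forall>x\<in>linf A. \<forall>c::real. \<phi> (\<lambda>a. c * x a) = c * \<phi> x)"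

text \<open>Positively homogeneous functions on ell_infty(A) = ell_1(A)^*.\<close>
definition H_l1 :: "'a set \<Rightarrow> (('a \<Rightarrow> real) \<Rightarrow> real) set" where
  "H_l1 A = {f. \<forall>x\<in>linf A. \<forall>t::real. t > 0 \<longrightarrow> f (\<lambda>a. t * x a) = t * f x}"

definition H_l1_pos :: "'a set \<Rightarrow> (('a \<Rightarrow> real) \<Rightarrow> real) set" where
  "H_l1_pos A = {f \<in> H_l1 A. \<forall>x\<in>linf A. f x \<ge> 0}"

definition FBL_norm :: "'a set \<Rightarrow> (('a \<Rightarrow> real) \<Rightarrow> real) \<Rightarrow> ereal" where
  "FBL_norm A f = Sup {ereal (\<Sum>k<n. \<bar>f (xs k)\<bar>) | n xs.
       (n::nat) \<ge> 1 \<and> (\<forall>k<n. xs k \<in> linf A) \<and> (\<forall>a\<in>A. (\<Sum>k<n. \<bar>xs k a\<bar>) \<le> 1)}"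

definition g_phi :: "(('a \<Rightarrow> real) \<Rightarrow> real) \<Rightarrow> ('a \<Rightarrow> real) \<Rightarrow> real" where
  "g_phi \<phi> x = \<bar>\<phi> (\<lambda>a. \<bar>x a\<bar>)\<bar>"

end

theory Submission
  imports Defs
begin

text \<open>
  For the norm, an
  admissible family \<open>x\<^sub>1, \<dots>, x\<^sub>n\<close> is collapsed into the single vector
  \<open>z = \<Sum>\<^sub>k sgn (\<phi> \<bar>x\<^sub>k\<bar>) \<bar>x\<^sub>k\<bar>\<close>, which lies in the unit ball and satisfies
  \<open>\<phi> z = \<Sum>\<^sub>k g_phi \<phi> x\<^sub>k\<close>; conversely, splitting \<open>x\<close> of the unit ball into its positive and
  negative parts gives an admissible pair with \<open>\<bar>\<phi> x\<bar> \<le> g_phi \<phi> x\<^sup>+ + g_phi \<phi> x\<^sup>-\<close>.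
\<close>

lemma linf_iff:
  "x \<in> linf A \<longleftrightarrow> (\<exists>B. \<forall>a\<in>A. \<bar>x a\<bar> \<le> B) \<and> (\<forall>a. a \<notin> A \<longrightarrow> x a = 0)"
  unfolding linf_def bdd_above_def by auto

lemma linf_zero: "(\<lambda>a. 0) \<in> linf A"
  by (auto simp: linf_iff)

lemma linf_abs: "x \<in> linf A \<Longrightarrow> (\<lambda>a. \<bar>x a\<bar>) \<in> linf A"
  by (auto simp: linf_iff)

lemma linf_add:
  assumes "x \<in> linf A" "y \<in> linf A"
  shows "(\<lambda>a. x a + y a) \<in> linf A"
proof -
  obtain B C where "\<forall>a\<in>A. \<bar>x a\<bar> \<le> B" "\<forall>a\<in>A. \<bar>y a\<bar> \<le> C"
    using assms by (auto simp: linf_iff)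
  then have "\<forall>a\<in>A. \<bar>x a + y a\<bar> \<le> B + C"
    by (metis abs_triangle_ineq add_mono order_trans)
  then show ?thesis
    using assms by (auto simp: linf_iff)
qed

lemma linf_scale:
  assumes "x \<in> linf A"
  shows "(\<lambda>a. c * x a) \<in> linf A"
proof -
  obtain B where "\<forall>a\<in>A. \<bar>x a\<bar> \<le> B"
    using assms by (auto simp: linf_iff)
  then have "\<forall>a\<in>A. \<bar>c * x a\<bar> \<le> \<bar>c\<bar> * B"
    by (simp add: abs_mult mult_left_mono)
  then show ?thesis
    using assms by (auto simp: linf_iff)
qed

lemma linf_max_zero:
  assumes "x \<in> linf A"
  shows "(\<lambda>a. max (x a) 0) \<in> linf A"
proof -
  obtain B where "\<forall>a\<in>A. \<bar>x a\<bar> \<le> B"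
    using assms by (auto simp: linf_iff)
  then have "\<forall>a\<in>A. \<bar>max (x a) 0\<bar> \<le> B"
    by (auto simp: max_def)
  then show ?thesis
    using assms by (auto simp: linf_iff)
qed

lemma linf_sum:
  "(\<And>k. k < (n::nat) \<Longrightarrow> y k \<in> linf A) \<Longrightarrow> (\<lambda>a. \<Sum>k<n. c k * y k a) \<in> linf A"
  by (induction n) (auto intro!: linf_zero linf_add linf_scale)

lemma linear_functional_linf_add:
  "linear_functional_linf A \<phi> \<Longrightarrow> x \<in> linf A \<Longrightarrow> y \<in> linf A \<Longrightarrow>
    \<phi> (\<lambda>a. x a + y a) = \<phi> x + \<phi> y"
  unfolding linear_functional_linf_def by blast

lemma linear_functional_linf_scale:
  "linear_functional_linf A \<phi> \<Longrightarrow> x \<in> linf A \<Longrightarrow> \<phi> (\<lambda>a. c * x a) = c * \<phi> x"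
  unfolding linear_functional_linf_def by blast

lemma linear_functional_linf_diff:
  assumes "linear_functional_linf A \<phi>" "x \<in> linf A" "y \<in> linf A"
  shows "\<phi> (\<lambda>a. x a - y a) = \<phi> x - \<phi> y"
  using linear_functional_linf_add[OF assms(1,2) linf_scale[OF assms(3), of "-1"]]
    linear_functional_linf_scale[OF assms(1,3), of "-1"]
  by simp

lemma linear_functional_linf_sum:
  assumes "linear_functional_linf A \<phi>" "\<And>k. k < (n::nat) \<Longrightarrow> y k \<in> linf A"
  shows "\<phi> (\<lambda>a. \<Sum>k<n. c k * y k a) = (\<Sum>k<n. c k * \<phi> (y k))"
  using assms(2)
proof (induction n)
  case 0
  show ?case
    using linear_functional_linf_scale[OF assms(1) linf_zero, of 0] by simp
next
  case (Suc n)
  have "(\<lambda>a. \<Sum>k<n. c k * y k a) \<in> linf A" "(\<lambda>a. c n * y n a) \<in> linf A"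
    using Suc.prems by (auto intro!: linf_sum linf_scale)
  then show ?case
    using Suc linear_functional_linf_add[OF assms(1)] linear_functional_linf_scale[OF assms(1)]
    by simp
qed

lemma g_phi_in_H_l1_pos:
  assumes "linear_functional_linf A \<phi>"
  shows "g_phi \<phi> \<in> H_l1_pos A"
  unfolding H_l1_pos_def H_l1_def
proof (intro CollectI conjI ballI allI impI)
  fix x :: "'a \<Rightarrow> real" and t :: real
  assume "x \<in> linf A" "t > 0"
  then show "g_phi \<phi> (\<lambda>a. t * x a) = t * g_phi \<phi> x"
    using linear_functional_linf_scale[OF assms linf_abs, of x t]
    by (simp add: g_phi_def abs_mult)
qed (simp add: g_phi_def)

lemma g_phi_sum_attained_in_unit_ball:
  fixes n :: nat
  assumes lin: "linear_functional_linf A \<phi>"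
    and xs: "\<forall>k<n. xs k \<in> linf A" and bound: "\<forall>a\<in>A. (\<Sum>k<n. \<bar>xs k a\<bar>) \<le> 1"
  obtains z where "z \<in> linf A" "\<forall>a\<in>A. \<bar>z a\<bar> \<le> 1" "(\<Sum>k<n. \<bar>g_phi \<phi> (xs k)\<bar>) = \<phi> z"
proof
  define c where "c k = sgn (\<phi> (\<lambda>a. \<bar>xs k a\<bar>))" for k
  define z where "z a = (\<Sum>k<n. c k * \<bar>xs k a\<bar>)" for a
  have abs_xs: "\<And>k. k < n \<Longrightarrow> (\<lambda>a. \<bar>xs k a\<bar>) \<in> linf A"
    using xs linf_abs by blast
  show "z \<in> linf A"
    unfolding z_def using linf_sum[where y = "\<lambda>k a. \<bar>xs k a\<bar>"] abs_xs by simp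
  show "\<forall>a\<in>A. \<bar>z a\<bar> \<le> 1"
  proof
    fix a assume "a \<in> A"
    have "\<bar>z a\<bar> \<le> (\<Sum>k<n. \<bar>c k * \<bar>xs k a\<bar>\<bar>)"
      unfolding z_def by (rule sum_abs)
    also have "\<dots> \<le> (\<Sum>k<n. \<bar>xs k a\<bar>)"
      by (intro sum_mono) (auto simp: c_def abs_mult sgn_if)
    also have "\<dots> \<le> 1"
      using bound \<open>a \<in> A\<close> by blast
    finally show "\<bar>z a\<bar> \<le> 1" .
  qed
  have "\<phi> z = (\<Sum>k<n. c k * \<phi> (\<lambda>a. \<bar>xs k a\<bar>))"
    unfolding z_def
    using linear_functional_linf_sum[OF lin, where y = "\<lambda>k a. \<bar>xs k a\<bar>"] abs_xs by simp
  also have "\<dots> = (\<Sum>k<n. \<bar>g_phi \<phi> (xs k)\<bar>)"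
    by (intro sum.cong) (auto simp: c_def g_phi_def sgn_if)
  finally show "(\<Sum>k<n. \<bar>g_phi \<phi> (xs k)\<bar>) = \<phi> z" ..
qed

lemma abs_phi_le_g_phi_pos_part_plus_neg_part:
  assumes lin: "linear_functional_linf A \<phi>" and x: "x \<in> linf A"
  shows "\<bar>\<phi> x\<bar> \<le> g_phi \<phi> (\<lambda>a. max (x a) 0) + g_phi \<phi> (\<lambda>a. max (- x a) 0)"
proof -
  let ?p = "\<lambda>a. max (x a) 0" and ?m = "\<lambda>a. max (- x a) 0"
  have "?p \<in> linf A" "?m \<in> linf A"
    using linf_max_zero[OF x] linf_max_zero[OF linf_scale[OF x, of "-1"]] by simp_all
  moreover have "x = (\<lambda>a. ?p a - ?m a)"
    by auto
  ultimately have "\<phi> x = \<phi> ?p - \<phi> ?m"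
    using linear_functional_linf_diff[OF lin] by metis
  moreover have "(\<lambda>a. \<bar>?p a\<bar>) = ?p" "(\<lambda>a. \<bar>?m a\<bar>) = ?m"
    by auto
  ultimately show ?thesis
    by (simp add: g_phi_def)
qed

theorem lemma4p6:
  fixes A :: "'a set" and \<phi> :: "('a \<Rightarrow> real) \<Rightarrow> real"
  assumes "A \<noteq> {}"
    and "linear_functional_linf A \<phi>"
  shows "g_phi \<phi> \<in> H_l1_pos A \<and>
         FBL_norm A (g_phi \<phi>) =
           Sup {ereal \<bar>\<phi> x\<bar> | x. x \<in> linf A \<and> (\<forall>a\<in>A. \<bar>x a\<bar> \<le> 1)}"
proof
  note lin = assms(2)
  show "g_phi \<phi> \<in> H_l1_pos A"
    using g_phi_in_H_l1_pos[OF lin] .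
  let ?Ball = "{ereal \<bar>\<phi> x\<bar> | x. x \<in> linf A \<and> (\<forall>a\<in>A. \<bar>x a\<bar> \<le> 1)}"
  let ?Fam = "{ereal (\<Sum>k<n. \<bar>g_phi \<phi> (xs k)\<bar>) | n xs.
       (n::nat) \<ge> 1 \<and> (\<forall>k<n. xs k \<in> linf A) \<and> (\<forall>a\<in>A. (\<Sum>k<n. \<bar>xs k a\<bar>) \<le> 1)}"
  have "Sup ?Fam \<le> Sup ?Ball"
  proof (rule Sup_least, clarify)
    fix n :: nat and xs
    assume "\<forall>k<n. xs k \<in> linf A" "\<forall>a\<in>A. (\<Sum>k<n. \<bar>xs k a\<bar>) \<le> 1"
    with lin obtain z where "z \<in> linf A" "\<forall>a\<in>A. \<bar>z a\<bar> \<le> 1"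
      and "(\<Sum>k<n. \<bar>g_phi \<phi> (xs k)\<bar>) = \<phi> z"
      by (rule g_phi_sum_attained_in_unit_ball)
    then show "ereal (\<Sum>k<n. \<bar>g_phi \<phi> (xs k)\<bar>) \<le> Sup ?Ball"
      by (intro Sup_upper2[of "ereal \<bar>\<phi> z\<bar>"]) auto
  qed
  moreover have "Sup ?Ball \<le> Sup ?Fam"
  proof (rule Sup_least, clarify)
    fix x assume x: "x \<in> linf A" and bound: "\<forall>a\<in>A. \<bar>x a\<bar> \<le> 1"
    define xs where "xs k = (if k = 0 then (\<lambda>a. max (x a) 0) else (\<lambda>a. max (- x a) 0))"
      for k :: nat
    have sum_2: "\<And>f. (\<Sum>k<(2::nat). f k) = f 0 + (f 1 :: real)"
      by (simp add: numeral_2_eq_2)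
    have "ereal (\<Sum>k<2. \<bar>g_phi \<phi> (xs k)\<bar>) \<in> ?Fam"
      using bound linf_max_zero[OF x] linf_max_zero[OF linf_scale[OF x, of "-1"]]
      by (intro CollectI exI[of _ 2] exI[of _ xs]) (auto simp: sum_2 xs_def max_def)
    moreover have "\<bar>\<phi> x\<bar> \<le> (\<Sum>k<2. \<bar>g_phi \<phi> (xs k)\<bar>)"
      using abs_phi_le_g_phi_pos_part_plus_neg_part[OF lin x] by (simp add: sum_2 xs_def g_phi_def)
    ultimately show "ereal \<bar>\<phi> x\<bar> \<le> Sup ?Fam"
      by (intro Sup_upper2) auto
  qed
  ultimately show "FBL_norm A (g_phi \<phi>) = Sup ?Ball"
    unfolding FBL_norm_def by (rule antisym)
qed

end
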